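(* Let $0<\beta<4\pi/3$ and let $r_A,r_B,r_C>0$ with $r_A+r_B+r_C=1$. Then the free energy $\mathcal{F}$ is globally strictly convex on the convex set of admissible profiles with mean densities $r_A,r_B,r_C$.
   Context: Admissible profiles with mean densities $r_\alpha$: triples $(n_A,n_B,n_C)$ of nonnegative measurable functions on $[0,1]$ with $n_A+n_B+n_C=1$ and $\int_0^1n_\alpha(x)\,dx=r_\alpha$. Free energy: $\mathcal{F}(\{n\})=\beta\int_0^1dx\int_x^1dz\,[n_A(x)n_C(z)+n_B(x)n_A(z)+n_C(x)n_B(z)]+\int_0^1\sum_{\alpha=A,B,C}n_\alpha(x)\ln n_\alpha(x)\,dx$. *)

theory Defs
  imports "HOL-Analysis.Analysis"
begin

definition admissible ::
  "real \<Rightarrow> real \<Rightarrow> real \<Rightarrow> (real \<Rightarrow> real) \<Rightarrow> (real \<Rightarrow> real) \<Rightarrow> (real \<Rightarrow> real) \<Rightarrow> bool" where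
  "admissible rA rB rC nA nB nC \<longleftrightarrow>
     set_borel_measurable lborel {0..1} nA \<and>
     set_borel_measurable lborel {0..1} nB \<and>
     set_borel_measurable lborel {0..1} nC \<and>
     (\<forall>x\<in>{0..1}. nA x \<ge> 0 \<and> nB x \<ge> 0 \<and> nC x \<ge> 0 \<and> nA x + nB x + nC x = 1) \<and>
     (LINT x:{0..1}|lborel. nA x) = rA \<and>
     (LINT x:{0..1}|lborel. nB x) = rB \<and>
     (LINT x:{0..1}|lborel. nC x) = rC"

text \<open>Free energy. Note that in Isabelle ln 0 = 0, so 0 * ln 0 = 0 as usual.\<close>
definition free_energy ::
  "real \<Rightarrow> (real \<Rightarrow> real) \<Rightarrow> (real \<Rightarrow> real) \<Rightarrow> (real \<Rightarrow> real) \<Rightarrow> real" where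
  "free_energy \<beta> nA nB nC =
     \<beta> * (LINT x:{0..1}|lborel. (LINT z:{x..1}|lborel.
            nA x * nC z + nB x * nA z + nC x * nB z))
     + (LINT x:{0..1}|lborel. nA x * ln (nA x) + nB x * ln (nB x) + nC x * ln (nC x))"

end

theory Submission
  imports Defs
begin

text \<open>The free energy is \<open>\<beta>\<close> times a bilinear energy plus the entropy \<open>\<Sum> n ln n\<close>.
  For two admissible profiles \<open>n, m\<close> put \<open>u = n\<^sub>A - m\<^sub>A\<close> and \<open>v = n\<^sub>B - m\<^sub>B\<close>; then
  \<open>n\<^sub>C - m\<^sub>C = -u - v\<close> and all differences have mean zero.  Because
  \<open>\<langle>f, g\<rangle> + \<langle>g, f\<rangle> = (\<integral>f)(\<integral>g)\<close> for \<open>\<langle>f, g\<rangle> = \<integral> f(x) \<integral>\<^sub>x\<^sup>1 g\<close>, the convexity gap of the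
  energy along the segment is \<open>-3 t (1 - t) \<langle>u, v + u/2\<rangle>\<close>.  The pointwise bound
  \<open>x ln x - x ln y - x + y \<ge> 3 (x - y)\<^sup>2 / (2 (x + 2 y))\<close>, summed over the three
  species, shows that the entropy gap is at least
  \<open>t (1 - t) \<integral> u\<^sup>2 + v\<^sup>2 + (u + v)\<^sup>2 = t (1 - t) (3/2 \<parallel>u\<parallel>\<^sup>2 + 2 \<parallel>v + u/2\<parallel>\<^sup>2)\<close>.
  Finally, for \<open>w\<close> of mean zero the primitive \<open>\<integral>\<^sub>x\<^sup>1 w\<close> vanishes at both ends, so it is
  within \<open>\<parallel>w\<parallel>\<^sup>2/24\<close> of a constant in \<open>L\<^sup>2\<close> (compare it on half-periods with its value at a
  point \<open>z\<close> where it agrees with its value at \<open>z + 1/2\<close>).  Cauchy--Schwarz then makes the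
  entropy gap win whenever \<open>\<beta> < 16/3\<close>, which covers \<open>\<beta> < 4\<pi>/3\<close>.\<close>

section \<open>Convexity of the entropy density\<close>

definition xlnx :: "real \<Rightarrow> real" where "xlnx x = x * ln x"

lemma xlnx_gap_lower_bound:
  fixes s :: real
  assumes "0 \<le> s"
  shows "3 * (s - 1)^2 / (2 * (s + 2)) \<le> s * ln s - s + 1"
proof (cases "s = 0")
  case False
  then have s: "s \<in> {0<..}" using assms by simp
  define k where "k s = s * ln s - s + 1 - 3 * (s - 1)^2 / (2 * (s + 2))" for s :: real
  define k' where "k' s = ln s - 3/2 * ((s - 1) * (s + 5) / (s + 2)^2)" for s :: real
  have k: "(k has_real_derivative k' x) (at x)" if "x \<in> {0<..}" for x
    unfolding k_def k'_def using that
    by (auto intro!: derivative_eq_intros) (simp add: divide_simps, algebra)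
  have k': "(k' has_real_derivative 1 / x - 27 / (x + 2)^3) (at x)" if "x \<in> {0<..}" for x
    unfolding k'_def using that
    by (auto intro!: derivative_eq_intros) (simp add: divide_simps, algebra)
  have k'': "0 \<le> 1 / x - 27 / (x + 2)^3" if "x \<in> {0<..}" for x :: real
  proof -
    have "(x + 2)^3 - 27 * x = (x - 1)^2 * (x + 8)" by algebra
    moreover have "0 \<le> (x - 1)^2 * (x + 8)" using that by simp
    ultimately have "27 * x \<le> (x + 2)^3" by simp
    then show ?thesis using that by (simp add: divide_simps)
  qed
  \<comment> \<open>\<open>k\<close> is convex with \<open>k 1 = k' 1 = 0\<close>, so it lies above its tangent at 1.\<close>
  have "k' 1 * (s - 1) \<le> k s - k 1"
    by (rule f''_imp_f'[OF convex_real_interval(3) k k' k'']) (use s in auto)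
  then show ?thesis by (simp add: k_def k'_def)
qed simp

lemma relative_entropy_lower_bound:
  fixes x y :: real
  assumes x: "0 \<le> x" and y: "0 < y"
  shows "3 * (x - y)^2 / (2 * (x + 2 * y)) \<le> x * ln x - x * ln y - x + y"
proof -
  define s where "s = x / y"
  have x_eq: "x = s * y" and s: "0 \<le> s" using x y by (auto simp: s_def)
  have "3 * (x - y)^2 / (2 * (x + 2 * y)) = 3 * (y * (s - 1))^2 / (2 * (y * (s + 2)))"
    unfolding x_eq by (simp add: algebra_simps)
  also have "\<dots> = y * (3 * (s - 1)^2 / (2 * (s + 2)))"
    using y by (simp add: power2_eq_square)
  also have "\<dots> \<le> y * (s * ln s - s + 1)"
    using xlnx_gap_lower_bound[OF s] y by (intro mult_left_mono) auto
  also have "\<dots> = x * ln x - x * ln y - x + y"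
    using y s unfolding x_eq by (cases "s = 0") (auto simp: ln_mult algebra_simps)
  finally show ?thesis .
qed

lemma xlnx_convexity_gap:
  fixes p q t :: real
  assumes p: "0 \<le> p" and q: "0 \<le> q" and t: "0 < t" "t < 1"
  shows "3/2 * t * (1 - t) * (p - q)^2 / ((1 - t) * p + t * q + 2 * (t * p + (1 - t) * q))
         \<le> t * xlnx p + (1 - t) * xlnx q - xlnx (t * p + (1 - t) * q)"
proof (cases "t * p + (1 - t) * q = 0")
  case True
  then have "p = 0" "q = 0" using p q t
    by (smt (verit, ccfv_SIG) mult_nonneg_nonneg mult_pos_pos)+
  then show ?thesis by (simp add: xlnx_def)
next
  case False
  define r where "r = t * p + (1 - t) * q"
  have r: "0 < r" using False p q t unfolding r_def
    by (smt (verit, ccfv_SIG) mult_nonneg_nonneg)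
  have A: "p + 2 * r \<in> {0<..}" "q + 2 * r \<in> {0<..}" using r p q by auto
  have jensen: "inverse ((1 - t) * (p + 2 * r) + t * (q + 2 * r))
      \<le> (1 - t) * inverse (p + 2 * r) + t * inverse (q + 2 * r)"
    using convex_onD[OF convex_on_inverse[of "{0<..}"] _ _ A, of t] t by simp
  have denom: "(1 - t) * p + t * q + 2 * r = (1 - t) * (p + 2 * r) + t * (q + 2 * r)"
    by algebra
  have split: "3/2 * t * (1 - t) * (p - q)^2 * ((1 - t) / (p + 2 * r) + t / (q + 2 * r))
      = t * (3 * (p - r)^2 / (2 * (p + 2 * r))) + (1 - t) * (3 * (q - r)^2 / (2 * (q + 2 * r)))"
  proof -
    have pq: "p - r = (1 - t) * (p - q)" "q - r = - t * (p - q)" unfolding r_def by algebra+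
    have "p + 2 * r \<noteq> 0" "q + 2 * r \<noteq> 0" using A by auto
    then show ?thesis unfolding pq by (simp add: divide_simps) algebra
  qed
  have "3/2 * t * (1 - t) * (p - q)^2 / ((1 - t) * p + t * q + 2 * r)
        \<le> 3/2 * t * (1 - t) * (p - q)^2 * ((1 - t) / (p + 2 * r) + t / (q + 2 * r))"
    unfolding denom divide_inverse using jensen t by (intro mult_left_mono) auto
  also have "\<dots> \<le> t * (p * ln p - p * ln r - p + r) + (1 - t) * (q * ln q - q * ln r - q + r)"
    unfolding split using relative_entropy_lower_bound[OF p r] relative_entropy_lower_bound[OF q r] t
    by (intro add_mono mult_left_mono) auto
  also have "\<dots> = t * xlnx p + (1 - t) * xlnx q - xlnx r"
    unfolding xlnx_def r_def by (simp add: algebra_simps)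
  finally show ?thesis unfolding r_def .
qed

lemma weighted_Cauchy_Schwarz3:
  fixes c1 c2 c3 y1 y2 y3 :: real
  assumes "0 \<le> y1" "0 \<le> y2" "0 \<le> y3"
  shows "(c1 * y1 + c2 * y2 + c3 * y3)^2 \<le> (c1^2 * y1 + c2^2 * y2 + c3^2 * y3) * (y1 + y2 + y3)"
proof -
  have "(c1^2 * y1 + c2^2 * y2 + c3^2 * y3) * (y1 + y2 + y3) - (c1 * y1 + c2 * y2 + c3 * y3)^2
      = y1 * y2 * (c1 - c2)^2 + y1 * y3 * (c1 - c3)^2 + y2 * y3 * (c2 - c3)^2" by algebra
  moreover have "0 \<le> y1 * y2 * (c1 - c2)^2 + y1 * y3 * (c1 - c3)^2 + y2 * y3 * (c2 - c3)^2"
    using assms by (intro add_nonneg_nonneg mult_nonneg_nonneg) auto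
  ultimately show ?thesis by simp
qed

lemma sum_sq_le_sq_sum_abs3:
  fixes d1 d2 d3 :: real
  assumes "d1 + d2 + d3 = 0"
  shows "2 * (d1^2 + d2^2 + d3^2) \<le> (\<bar>d1\<bar> + \<bar>d2\<bar> + \<bar>d3\<bar>)^2"
proof -
  have "d1^2 + d2^2 + d3^2 = - 2 * (d1 * d2 + d1 * d3 + d2 * d3)"
    using assms by (simp add: eq_neg_iff_add_eq_0[symmetric]) algebra
  moreover have "(\<bar>d1\<bar> + \<bar>d2\<bar> + \<bar>d3\<bar>)^2
      = d1^2 + d2^2 + d3^2 + 2 * (\<bar>d1 * d2\<bar> + \<bar>d1 * d3\<bar> + \<bar>d2 * d3\<bar>)"
    by (simp add: power2_eq_square abs_mult algebra_simps)
  ultimately show ?thesis by (smt (verit) abs_ge_minus_self)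
qed

lemma sum_sq_div_ge3:
  fixes d1 d2 d3 y1 y2 y3 :: real
  assumes y: "0 \<le> y1" "0 \<le> y2" "0 \<le> y3" "y1 + y2 + y3 = 3"
    and zero: "y1 = 0 \<Longrightarrow> d1 = 0" "y2 = 0 \<Longrightarrow> d2 = 0" "y3 = 0 \<Longrightarrow> d3 = 0"
    and d: "d1 + d2 + d3 = 0"
  shows "2 * (d1^2 + d2^2 + d3^2) \<le> 3 * (d1^2 / y1 + d2^2 / y2 + d3^2 / y3)"
proof -
  have c: "\<bar>d\<bar> = (\<bar>d\<bar> / y) * y \<and> d^2 / y = (\<bar>d\<bar> / y)^2 * y"
    if "y = 0 \<Longrightarrow> d = 0" for d y :: real
    using that by (cases "y = 0") (simp_all add: power2_eq_square field_simps)
  note c1 = c[of y1 d1, OF zero(1)] and c2 = c[of y2 d2, OF zero(2)] and c3 = c[of y3 d3, OF zero(3)]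
  have "2 * (d1^2 + d2^2 + d3^2) \<le> (\<bar>d1\<bar> + \<bar>d2\<bar> + \<bar>d3\<bar>)^2"
    by (rule sum_sq_le_sq_sum_abs3[OF d])
  also have "\<dots> = ((\<bar>d1\<bar> / y1) * y1 + (\<bar>d2\<bar> / y2) * y2 + (\<bar>d3\<bar> / y3) * y3)^2"
    using c1 c2 c3 by presburger
  also have "\<dots> \<le> ((\<bar>d1\<bar> / y1)^2 * y1 + (\<bar>d2\<bar> / y2)^2 * y2 + (\<bar>d3\<bar> / y3)^2 * y3) * (y1 + y2 + y3)"
    by (rule weighted_Cauchy_Schwarz3[OF y(1-3)])
  also have "\<dots> = 3 * (d1^2 / y1 + d2^2 / y2 + d3^2 / y3)"
    using c1 c2 c3 y(4) by simp
  finally show ?thesis .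
qed

lemma entropy_convexity_gap3:
  fixes p1 p2 p3 q1 q2 q3 t :: real
  assumes p: "0 \<le> p1" "0 \<le> p2" "0 \<le> p3" "p1 + p2 + p3 = 1"
    and q: "0 \<le> q1" "0 \<le> q2" "0 \<le> q3" "q1 + q2 + q3 = 1"
    and t: "0 < t" "t < 1"
  shows "t * (1 - t) * ((p1 - q1)^2 + (p2 - q2)^2 + (p3 - q3)^2) \<le>
     (t * xlnx p1 + (1 - t) * xlnx q1 - xlnx (t * p1 + (1 - t) * q1))
   + (t * xlnx p2 + (1 - t) * xlnx q2 - xlnx (t * p2 + (1 - t) * q2))
   + (t * xlnx p3 + (1 - t) * xlnx q3 - xlnx (t * p3 + (1 - t) * q3))"
proof -
  define y where "y a b = (1 - t) * a + t * b + 2 * (t * a + (1 - t) * b)" for a b :: real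
  have y_nonneg: "0 \<le> y a b" if "0 \<le> a" "0 \<le> b" for a b
    unfolding y_def using that t by simp
  have y_zero: "a - b = 0" if "0 \<le> a" "0 \<le> b" "y a b = 0" for a b
  proof -
    have "(1 - t) * a = 0" "t * b = 0" using that t unfolding y_def
      by (smt (verit) mult_nonneg_nonneg)+
    then show ?thesis using t by simp
  qed
  \<comment> \<open>On the simplex the weights sum to 3; this doubles the naive constant coming from
      \<open>xlnx'' \<ge> 1\<close> on [0, 1].\<close>
  have "y p1 q1 + y p2 q2 + y p3 q3 = 3" using p(4) q(4) unfolding y_def by algebra
  moreover have "(p1 - q1) + (p2 - q2) + (p3 - q3) = 0" using p(4) q(4) by simp
  ultimately have "2 * ((p1 - q1)^2 + (p2 - q2)^2 + (p3 - q3)^2)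
      \<le> 3 * ((p1 - q1)^2 / y p1 q1 + (p2 - q2)^2 / y p2 q2 + (p3 - q3)^2 / y p3 q3)"
    using p q by (intro sum_sq_div_ge3 y_nonneg y_zero) auto
  then have "t * (1 - t) * ((p1 - q1)^2 + (p2 - q2)^2 + (p3 - q3)^2)
      \<le> 3/2 * t * (1 - t) * ((p1 - q1)^2 / y p1 q1 + (p2 - q2)^2 / y p2 q2 + (p3 - q3)^2 / y p3 q3)"
    using t by (simp add: mult_left_mono)
  also have "\<dots> = 3/2 * t * (1 - t) * (p1 - q1)^2 / y p1 q1
      + 3/2 * t * (1 - t) * (p2 - q2)^2 / y p2 q2 + 3/2 * t * (1 - t) * (p3 - q3)^2 / y p3 q3"
    by (simp only: distrib_left times_divide_eq_right)
  finally show ?thesis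
    using xlnx_convexity_gap[OF p(1) q(1) t] xlnx_convexity_gap[OF p(2) q(2) t]
      xlnx_convexity_gap[OF p(3) q(3) t]
    unfolding y_def by linarith
qed

definition unit_bounded :: "(real \<Rightarrow> real) \<Rightarrow> bool" where
  "unit_bounded f \<longleftrightarrow>
     f \<in> borel_measurable borel \<and> (\<forall>x. x \<notin> {0..1} \<longrightarrow> f x = 0) \<and> (\<exists>C. \<forall>x. \<bar>f x\<bar> \<le> C)"

lemma unit_boundedD:
  assumes "unit_bounded f"
  shows "f \<in> borel_measurable borel" "\<And>x. x \<notin> {0..1} \<Longrightarrow> f x = 0" "\<exists>C. \<forall>x. \<bar>f x\<bar> \<le> C"
  using assms unfolding unit_bounded_def by auto

lemma unit_bounded_measurable [measurable]: "unit_bounded f \<Longrightarrow> f \<in> borel_measurable lborel"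
  using unit_boundedD(1) by simp

lemma unit_bounded_boundE:
  assumes "unit_bounded f"
  obtains C where "0 \<le> C" "\<And>x. \<bar>f x\<bar> \<le> C"
proof -
  obtain C where "\<forall>x. \<bar>f x\<bar> \<le> C" using unit_boundedD(3)[OF assms] by blast
  then show ?thesis using that[of C] by (meson abs_ge_zero order_trans)
qed

lemma unit_bounded_integrable:
  assumes "unit_bounded f"
  shows "integrable lborel f"
proof -
  obtain C where C: "0 \<le> C" "\<And>x. \<bar>f x\<bar> \<le> C" using unit_bounded_boundE[OF assms] by blast
  have "integrable lborel (\<lambda>x. indicator {0..1} (x::real) * C)"
    by (simp add: integrable_indicator_iff emeasure_lborel_Icc_eq)
  then show ?thesis
  proof (rule Bochner_Integration.integrable_bound)
    show "f \<in> borel_measurable lborel" using assms by measurable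
    show "AE x in lborel. norm (f x) \<le> norm (indicator {0..1} x * C)"
      using C unit_boundedD(2)[OF assms] by (auto split: split_indicator)
  qed
qed

lemma unit_bounded_set_integrable:
  "unit_bounded f \<Longrightarrow> S \<in> sets lborel \<Longrightarrow> set_integrable lborel S f"
  unfolding set_integrable_def using unit_bounded_integrable integrable_mult_indicator by blast

lemma unit_bounded_add: "unit_bounded f \<Longrightarrow> unit_bounded g \<Longrightarrow> unit_bounded (\<lambda>x. f x + g x)"
  unfolding unit_bounded_def
  by (auto intro!: exI[where x="_+_"] abs_triangle_ineq[THEN order_trans] add_mono)

lemma unit_bounded_diff: "unit_bounded f \<Longrightarrow> unit_bounded g \<Longrightarrow> unit_bounded (\<lambda>x. f x - g x)"
  unfolding unit_bounded_def
  by (auto intro!: exI[where x="_+_"] abs_triangle_ineq4[THEN order_trans] add_mono)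

lemma unit_bounded_cmult: "unit_bounded f \<Longrightarrow> unit_bounded (\<lambda>x. c * f x)"
  unfolding unit_bounded_def by (auto intro!: exI[where x="\<bar>c\<bar>*_"] mult_left_mono simp: abs_mult)

lemma unit_bounded_lin:
  "unit_bounded f \<Longrightarrow> unit_bounded g \<Longrightarrow> unit_bounded (\<lambda>x. a * f x + b * g x)"
  using unit_bounded_add unit_bounded_cmult by blast

lemma unit_bounded_mult_bounded:
  assumes "unit_bounded f" "g \<in> borel_measurable borel" "\<And>x. \<bar>g x\<bar> \<le> D"
  shows "unit_bounded (\<lambda>x. f x * g x)"
proof -
  obtain C where C: "0 \<le> C" "\<And>x. \<bar>f x\<bar> \<le> C" using unit_bounded_boundE[OF assms(1)] by blast
  have "\<bar>f x * g x\<bar> \<le> C * D" for x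
    unfolding abs_mult using C assms(3) by (intro mult_mono) auto
  then show ?thesis using assms unit_boundedD[OF assms(1)] unfolding unit_bounded_def by auto
qed

lemma unit_bounded_mult: "unit_bounded f \<Longrightarrow> unit_bounded g \<Longrightarrow> unit_bounded (\<lambda>x. f x * g x)"
  by (metis unit_bounded_boundE unit_bounded_def unit_bounded_mult_bounded)

lemma unit_bounded_power2: "unit_bounded f \<Longrightarrow> unit_bounded (\<lambda>x. (f x)^2)"
  using unit_bounded_mult[of f f] by (simp add: power2_eq_square)

lemma unit_bounded_indicator_mult:
  assumes "set_borel_measurable lborel {0..1} f" "\<And>x. x \<in> {0..1} \<Longrightarrow> 0 \<le> f x \<and> f x \<le> 1"
  shows "unit_bounded (\<lambda>x. indicator {0..1} x * f x)"
proof -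
  have "(\<lambda>x. indicator {0..1} x * f x) \<in> borel_measurable borel"
    using assms(1) unfolding set_borel_measurable_def by simp
  moreover have "\<bar>indicator {0..1} x * f x\<bar> \<le> 1" for x
    using assms(2)[of x] by (auto split: split_indicator)
  ultimately show ?thesis unfolding unit_bounded_def by auto
qed

lemma abs_xlnx_le_one:
  assumes "0 \<le> y" "y \<le> 1"
  shows "\<bar>xlnx y\<bar> \<le> 1"
proof (cases "y = 0")
  case False
  then have y: "0 < y" using assms by simp
  have "- ln y \<le> 1 / y - 1" using ln_le_minus_one[of "1 / y"] y by (simp add: ln_div)
  then have "y * (- ln y) \<le> y * (1 / y - 1)" using y by (intro mult_left_mono) auto
  then have "- (y * ln y) \<le> 1 - y" using y by (simp add: right_diff_distrib)
  moreover have "y * ln y \<le> 0" using y assms by (simp add: mult_nonneg_nonpos)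
  ultimately show ?thesis unfolding xlnx_def using y by linarith
qed (simp add: xlnx_def)

lemma unit_bounded_xlnx:
  assumes f: "unit_bounded f" and range: "\<And>x. 0 \<le> f x \<and> f x \<le> 1"
  shows "unit_bounded (\<lambda>x. xlnx (f x))"
proof -
  have [measurable]: "f \<in> borel_measurable borel" using unit_boundedD(1)[OF f] .
  have "(\<lambda>x. xlnx (f x)) \<in> borel_measurable borel" unfolding xlnx_def by measurable
  moreover have "\<forall>x. x \<notin> {0..1} \<longrightarrow> xlnx (f x) = 0"
    using unit_boundedD(2)[OF f] by (simp add: xlnx_def)
  moreover have "\<forall>x. \<bar>xlnx (f x)\<bar> \<le> 1" using range abs_xlnx_le_one by blast
  ultimately show ?thesis unfolding unit_bounded_def by blast
qed

section \<open>Tails, masses and the pairing\<close>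

definition tail :: "(real \<Rightarrow> real) \<Rightarrow> real \<Rightarrow> real" where
  "tail g x = (LINT z:{x..}|lborel. g z)"

definition mass :: "(real \<Rightarrow> real) \<Rightarrow> real" where
  "mass f = (LINT x:{0..1}|lborel. f x)"

definition pairing :: "(real \<Rightarrow> real) \<Rightarrow> (real \<Rightarrow> real) \<Rightarrow> real" where
  "pairing f g = (LINT x:{0..1}|lborel. f x * tail g x)"

lemma unit_bounded_set_integral_eq_integral:
  assumes "unit_bounded h"
  shows "(LINT x:{0..1}|lborel. h x) = integral\<^sup>L lborel h"
  unfolding set_lebesgue_integral_def
  by (rule Bochner_Integration.integral_cong)
     (use unit_boundedD(2)[OF assms] in \<open>auto split: split_indicator\<close>)

lemma set_integral_abs_le_measure:
  assumes "unit_bounded g" "\<And>x. \<bar>g x\<bar> \<le> C" "S \<in> sets lborel" "emeasure lborel S < \<infinity>"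
  shows "\<bar>LINT z:S|lborel. g z\<bar> \<le> C * measure lborel S"
proof -
  have "\<bar>LINT z:S|lborel. g z\<bar> \<le> (LINT z:S|lborel. \<bar>g z\<bar>)"
    using set_integral_norm_bound[OF unit_bounded_set_integrable[OF assms(1,3)]] by simp
  also have "\<dots> \<le> (LINT z:S|lborel. C)"
  proof (rule set_integral_mono)
    show "set_integrable lborel S (\<lambda>z. \<bar>g z\<bar>)"
      using unit_bounded_set_integrable[OF assms(1,3)] set_integrable_abs by blast
    show "set_integrable lborel S (\<lambda>z. C)"
      using assms(3,4) by (simp add: set_integrable_def integrable_indicator_iff)
  qed (use assms(2) in auto)
  also have "\<dots> = C * measure lborel S"
    using assms(3,4) by (simp add: set_integral_const)
  finally show ?thesis .
qed

lemma tail_eq_Icc: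
  assumes "unit_bounded w"
  shows "tail w x = (LINT z:{x..1}|lborel. w z)"
  unfolding tail_def set_lebesgue_integral_def
  by (rule arg_cong[where f="\<lambda>h. integral\<^sup>L lborel h"], rule ext)
     (use unit_boundedD(2)[OF assms] in \<open>auto split: split_indicator\<close>)

lemma tail_zero_eq_mass: "unit_bounded w \<Longrightarrow> tail w 0 = mass w"
  unfolding mass_def by (rule tail_eq_Icc)

lemma tail_one:
  assumes "unit_bounded w"
  shows "tail w 1 = 0"
proof -
  obtain C where C: "\<And>x. \<bar>w x\<bar> \<le> C" using unit_bounded_boundE[OF assms] by blast
  have "\<bar>tail w 1\<bar> \<le> C * measure lborel {1..1::real}"
    unfolding tail_eq_Icc[OF assms] by (rule set_integral_abs_le_measure[OF assms C]) auto
  then show ?thesis by simp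
qed

lemma set_integral_Icc_split:
  fixes f :: "real \<Rightarrow> real"
  assumes f: "set_integrable lborel {a..c} f" and "a \<le> b" "b \<le> c"
  shows "(LINT x:{a..c}|lborel. f x) = (LINT x:{a..b}|lborel. f x) + (LINT x:{b..c}|lborel. f x)"
proof -
  have "{a..c} = {a..b} \<union> {b..c}" using assms by auto
  also have "(LINT x:\<dots>|lborel. f x) = (LINT x:{a..b}|lborel. f x) + (LINT x:{b..c}|lborel. f x)"
  proof (rule set_integral_Un_AE)
    show "AE x in lborel. \<not> (x \<in> {a..b} \<and> x \<in> {b..c})"
      using AE_lborel_singleton[of b] by eventually_elim auto
    show "set_integrable lborel {a..b} f" "set_integrable lborel {b..c} f"
      using assms by (auto intro: set_integrable_subset[OF f])
  qed auto
  finally show ?thesis .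
qed

lemma tail_split:
  assumes "unit_bounded w" "a \<le> b" "b \<le> 1"
  shows "tail w a = (LINT x:{a..b}|lborel. w x) + tail w b"
  unfolding tail_eq_Icc[OF assms(1)]
  by (rule set_integral_Icc_split[OF unit_bounded_set_integrable[OF assms(1)]]) (use assms in auto)

lemma tail_lipschitz:
  assumes w: "unit_bounded w" and C: "\<And>x. \<bar>w x\<bar> \<le> C"
  shows "\<bar>tail w x - tail w y\<bar> \<le> C * \<bar>x - y\<bar>"
proof -
  have *: "\<bar>tail w a - tail w b\<bar> \<le> C * \<bar>a - b\<bar>" if "a \<le> b" for a b
  proof -
    have "{a..} = {a..<b} \<union> {b..}" "{a..<b} \<inter> {b..} = {}" using that by auto
    then have "tail w a = (LINT z:{a..<b}|lborel. w z) + tail w b"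
      unfolding tail_def by (metis set_integral_Un unit_bounded_set_integrable[OF w] sets_lborel
          atLeast_borel atLeastLessThan_borel)
    then have "\<bar>tail w a - tail w b\<bar> = \<bar>LINT z:{a..<b}|lborel. w z\<bar>" by simp
    also have "\<dots> \<le> C * measure lborel {a..<b}"
      by (rule set_integral_abs_le_measure[OF w C]) (use that in \<open>auto simp: ennreal_less_top\<close>)
    also have "\<dots> = C * \<bar>a - b\<bar>" using that by (simp add: measure_def)
    finally show ?thesis .
  qed
  show ?thesis
    by (cases "x \<le> y") (use *[of x y] *[of y x] in \<open>auto simp: abs_minus_commute\<close>)
qed

lemma continuous_on_tail:
  assumes "unit_bounded w"
  shows "continuous_on S (tail w)"
proof -
  obtain C where C: "0 \<le> C" "\<And>x. \<bar>w x\<bar> \<le> C" using unit_bounded_boundE[OF assms] by blast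
  have "C-lipschitz_on S (tail w)"
    unfolding lipschitz_on_def dist_real_def using tail_lipschitz[OF assms C(2)] C(1) by auto
  then show ?thesis by (rule lipschitz_on_continuous_on)
qed

lemma tail_measurable [measurable]: "unit_bounded w \<Longrightarrow> tail w \<in> borel_measurable borel"
  using continuous_on_tail borel_measurable_continuous_onI by blast

lemma abs_tail_le:
  assumes w: "unit_bounded w" and C: "\<And>x. \<bar>w x\<bar> \<le> C"
  shows "\<bar>tail w x\<bar> \<le> C"
proof -
  have "\<bar>tail w x\<bar> = \<bar>\<integral>z. indicator {x..} z * w z \<partial>lborel\<bar>"
    unfolding tail_def set_lebesgue_integral_def by simp
  also have "\<dots> \<le> (\<integral>z. indicator {0..1} (z::real) * C \<partial>lborel)"
  proof (rule integral_abs_bound_integral)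
    show "integrable lborel (\<lambda>z. indicator {x..} z * w z)"
      using unit_bounded_set_integrable[OF w, of "{x..}"] unfolding set_integrable_def by simp
    show "integrable lborel (\<lambda>z. indicator {0..1} (z::real) * C)"
      by (simp add: integrable_indicator_iff emeasure_lborel_Icc_eq)
    show "\<bar>indicator {x..} z * w z\<bar> \<le> indicator {0..1} z * C" for z
      using C[of z] C[of 0] unit_boundedD(2)[OF w, of z] by (auto split: split_indicator)
  qed
  also have "\<dots> = C" by simp
  finally show ?thesis .
qed

lemma unit_bounded_mult_tail: "unit_bounded f \<Longrightarrow> unit_bounded g \<Longrightarrow> unit_bounded (\<lambda>x. f x * tail g x)"
  by (metis unit_bounded_mult_bounded tail_measurable unit_bounded_boundE abs_tail_le)

lemma tail_lin:
  assumes "unit_bounded f" "unit_bounded g"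
  shows "tail (\<lambda>x. a * f x + b * g x) y = a * tail f y + b * tail g y"
  unfolding tail_def using unit_bounded_set_integrable[OF assms(1), of "{y..}"]
    unit_bounded_set_integrable[OF assms(2), of "{y..}"] by simp

lemma mass_lin:
  assumes "unit_bounded f" "unit_bounded g"
  shows "mass (\<lambda>x. a * f x + b * g x) = a * mass f + b * mass g"
  unfolding mass_def using unit_bounded_set_integrable[OF assms(1), of "{0..1}"]
    unit_bounded_set_integrable[OF assms(2), of "{0..1}"] by simp

lemma mass_diff: "unit_bounded f \<Longrightarrow> unit_bounded g \<Longrightarrow> mass (\<lambda>x. f x - g x) = mass f - mass g"
  using mass_lin[of f g 1 "-1"] by simp

lemma pairing_lin_right:
  assumes f: "unit_bounded f" and g: "unit_bounded g" "unit_bounded g'"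
  shows "pairing f (\<lambda>x. a * g x + b * g' x) = a * pairing f g + b * pairing f g'"
proof -
  have "pairing f (\<lambda>x. a * g x + b * g' x)
      = (LINT x:{0..1}|lborel. a * (f x * tail g x) + b * (f x * tail g' x))"
    unfolding pairing_def tail_lin[OF g] by (simp add: algebra_simps)
  also have "\<dots> = a * pairing f g + b * pairing f g'"
    unfolding pairing_def
    using unit_bounded_set_integrable[OF unit_bounded_mult_tail[OF f g(1)], of "{0..1}"]
      unit_bounded_set_integrable[OF unit_bounded_mult_tail[OF f g(2)], of "{0..1}"] by simp
  finally show ?thesis .
qed

lemma pairing_lin_left:
  assumes f: "unit_bounded f" "unit_bounded f'" and g: "unit_bounded g"
  shows "pairing (\<lambda>x. a * f x + b * f' x) g = a * pairing f g + b * pairing f' g"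
proof -
  have "pairing (\<lambda>x. a * f x + b * f' x) g
      = (LINT x:{0..1}|lborel. a * (f x * tail g x) + b * (f' x * tail g x))"
    unfolding pairing_def by (simp add: algebra_simps)
  also have "\<dots> = a * pairing f g + b * pairing f' g"
    unfolding pairing_def
    using unit_bounded_set_integrable[OF unit_bounded_mult_tail[OF f(1) g], of "{0..1}"]
      unit_bounded_set_integrable[OF unit_bounded_mult_tail[OF f(2) g], of "{0..1}"] by simp
  finally show ?thesis .
qed

lemma integral_eq_mass: "unit_bounded h \<Longrightarrow> integral\<^sup>L lborel h = mass h"
  unfolding mass_def by (simp add: unit_bounded_set_integral_eq_integral)

lemma integral_atMost_eq_mass_minus_tail:
  assumes g: "unit_bounded g"
  shows "(\<integral>x. indicator {..z} x * g x \<partial>lborel) = mass g - tail g z"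
proof -
  have "(\<integral>x. indicator {..z} x * g x \<partial>lborel) = (\<integral>x. g x - indicator {z<..} x * g x \<partial>lborel)"
    by (rule Bochner_Integration.integral_cong) (auto split: split_indicator)
  also have "\<dots> = integral\<^sup>L lborel g - (\<integral>x. indicator {z<..} x * g x \<partial>lborel)"
    using unit_bounded_integrable[OF g] unit_bounded_set_integrable[OF g, of "{z<..}"]
    unfolding set_integrable_def by (intro Bochner_Integration.integral_diff) auto
  also have "(\<integral>x. indicator {z<..} x * g x \<partial>lborel) = tail g z"
    unfolding tail_def set_lebesgue_integral_def
  proof (rule integral_cong_AE)
    show "AE x in lborel. indicator {z<..} x * g x = indicator {z..} x *\<^sub>R g x"
      using AE_lborel_singleton[of z] by eventually_elim (auto split: split_indicator)
  qed (use g in measurable)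
  finally show ?thesis using integral_eq_mass[OF g] by simp
qed

lemma integral_triangle_swap:
  assumes f: "unit_bounded f" and g: "unit_bounded g"
  shows "(\<integral>x. (\<integral>z. (if x \<le> z then g x * f z else 0) \<partial>lborel) \<partial>lborel)
       = (\<integral>z. (\<integral>x. (if x \<le> z then g x * f z else 0) \<partial>lborel) \<partial>lborel)"
proof -
  obtain Cf where Cf: "0 \<le> Cf" "\<And>x. \<bar>f x\<bar> \<le> Cf" using unit_bounded_boundE[OF f] by blast
  obtain Cg where Cg: "0 \<le> Cg" "\<And>x. \<bar>g x\<bar> \<le> Cg" using unit_bounded_boundE[OF g] by blast
  have [measurable]: "f \<in> borel_measurable lborel" "g \<in> borel_measurable lborel"
    using f g by measurable
  let ?Q = "{0..1::real} \<times> {0..1::real}"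
  have "emeasure (lborel \<Otimes>\<^sub>M lborel) ?Q = emeasure lborel {0..1::real} * emeasure lborel {0..1::real}"
    by (rule sigma_finite_measure.emeasure_pair_measure_Times[OF sigma_finite_lborel]) auto
  then have "integrable (lborel \<Otimes>\<^sub>M lborel) (\<lambda>p. indicator ?Q p * (Cg * Cf))"
    by (intro integrable_mult_left) (simp add: integrable_indicator_iff ennreal_less_top)
  then have "integrable (lborel \<Otimes>\<^sub>M lborel) (\<lambda>(x, z). if x \<le> z then g x * f z else 0)"
  proof (rule Bochner_Integration.integrable_bound)
    show "AE p in lborel \<Otimes>\<^sub>M lborel.
        norm ((\<lambda>(x, z). if x \<le> z then g x * f z else 0) p) \<le> norm (indicator ?Q p * (Cg * Cf))"
    proof (rule AE_I2, clarify)
      fix x z :: real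
      have "\<bar>g x * f z\<bar> \<le> Cg * Cf" unfolding abs_mult using Cf Cg by (intro mult_mono) auto
      moreover have "g x * f z = 0" if "(x, z) \<notin> ?Q"
        using that unit_boundedD(2)[OF f] unit_boundedD(2)[OF g] by auto
      ultimately show "norm (if x \<le> z then g x * f z else 0) \<le> norm (indicator ?Q (x, z) * (Cg * Cf))"
        using Cf Cg by (auto split: split_indicator)
    qed
  qed measurable
  from lborel_pair.Fubini_integral[OF this] show ?thesis by simp
qed

lemma pairing_swap_add:
  assumes f: "unit_bounded f" and g: "unit_bounded g"
  shows "pairing g f + pairing f g = mass f * mass g"
proof -
  have "pairing g f = (\<integral>x. g x * tail f x \<partial>lborel)"
    unfolding pairing_def by (rule unit_bounded_set_integral_eq_integral[OF unit_bounded_mult_tail[OF g f]])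
  also have "\<dots> = (\<integral>x. (\<integral>z. (if x \<le> z then g x * f z else 0) \<partial>lborel) \<partial>lborel)"
  proof (rule Bochner_Integration.integral_cong[OF refl])
    fix x
    have "g x * tail f x = (\<integral>z. g x * (indicator {x..} z * f z) \<partial>lborel)"
      unfolding tail_def set_lebesgue_integral_def by simp
    also have "\<dots> = (\<integral>z. (if x \<le> z then g x * f z else 0) \<partial>lborel)"
      by (rule Bochner_Integration.integral_cong) (auto split: split_indicator)
    finally show "g x * tail f x = (\<integral>z. (if x \<le> z then g x * f z else 0) \<partial>lborel)" .
  qed
  also have "\<dots> = (\<integral>z. (\<integral>x. (if x \<le> z then g x * f z else 0) \<partial>lborel) \<partial>lborel)"
    by (rule integral_triangle_swap[OF f g])
  also have "\<dots> = (\<integral>z. mass g * f z - f z * tail g z \<partial>lborel)"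
  proof (rule Bochner_Integration.integral_cong[OF refl])
    fix z
    have "(\<integral>x. (if x \<le> z then g x * f z else 0) \<partial>lborel) = (\<integral>x. f z * (indicator {..z} x * g x) \<partial>lborel)"
      by (rule Bochner_Integration.integral_cong) (auto split: split_indicator)
    also have "\<dots> = f z * (mass g - tail g z)"
      by (simp only: integral_mult_right_zero integral_atMost_eq_mass_minus_tail[OF g])
    finally show "(\<integral>x. (if x \<le> z then g x * f z else 0) \<partial>lborel) = mass g * f z - f z * tail g z"
      by (simp add: algebra_simps)
  qed
  also have "\<dots> = mass g * integral\<^sup>L lborel f - (\<integral>z. f z * tail g z \<partial>lborel)"
    using unit_bounded_integrable[OF f] unit_bounded_integrable[OF unit_bounded_mult_tail[OF f g]]
    by simp
  also have "(\<integral>z. f z * tail g z \<partial>lborel) = pairing f g"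
    unfolding pairing_def by (rule unit_bounded_set_integral_eq_integral[OF unit_bounded_mult_tail[OF f g], symmetric])
  finally show ?thesis using integral_eq_mass[OF f] by simp
qed

lemma set_integral_nonneg:
  fixes f :: "'a \<Rightarrow> real"
  assumes "\<And>x. x \<in> S \<Longrightarrow> 0 \<le> f x"
  shows "0 \<le> (LINT x:S|M. f x)"
  unfolding set_lebesgue_integral_def
  by (rule Bochner_Integration.integral_nonneg) (use assms in \<open>auto split: split_indicator\<close>)

lemma square_le_mult_of_quadratic_nonneg:
  fixes A B C :: real
  assumes "\<And>l. 0 \<le> A - 2 * l * B + l^2 * C" "0 \<le> C"
  shows "B^2 \<le> A * C"
proof (cases "C = 0")
  case True
  show ?thesis
  proof (rule ccontr)
    assume "\<not> ?thesis"
    then have "B \<noteq> 0" using True by simp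
    then have "A - 2 * ((A + 1) / (2 * B)) * B + ((A + 1) / (2 * B))^2 * C = -1"
      using True by (simp add: field_simps)
    then show False using assms(1)[of "(A + 1) / (2 * B)"] by simp
  qed
next
  case False
  then have C: "0 < C" using assms(2) by simp
  have "0 \<le> A - 2 * (B / C) * B + (B / C)^2 * C" by (rule assms(1))
  also have "\<dots> = (A * C - B^2) / C" using C by (simp add: field_simps power2_eq_square)
  finally show ?thesis using C by (simp add: divide_simps)
qed

lemma set_integral_Cauchy_Schwarz:
  fixes f g :: "'a \<Rightarrow> real"
  assumes "set_integrable M S (\<lambda>x. (f x)^2)" "set_integrable M S (\<lambda>x. (g x)^2)"
    and "set_integrable M S (\<lambda>x. f x * g x)"
  shows "(LINT x:S|M. f x * g x)^2 \<le> (LINT x:S|M. (f x)^2) * (LINT x:S|M. (g x)^2)"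
proof (rule square_le_mult_of_quadratic_nonneg)
  fix l :: real
  have "(\<lambda>x. (f x - l * g x)^2) = (\<lambda>x. (f x)^2 - 2 * l * (f x * g x) + l^2 * (g x)^2)"
    by (rule ext) (simp add: power2_eq_square algebra_simps)
  then have "(LINT x:S|M. (f x - l * g x)^2)
      = (LINT x:S|M. (f x)^2) - 2 * l * (LINT x:S|M. f x * g x) + l^2 * (LINT x:S|M. (g x)^2)"
    using assms by simp
  moreover have "0 \<le> (LINT x:S|M. (f x - l * g x)^2)" by (rule set_integral_nonneg) simp
  ultimately show "0 \<le> (LINT x:S|M. (f x)^2) - 2 * l * (LINT x:S|M. f x * g x)
      + l^2 * (LINT x:S|M. (g x)^2)" by simp
qed (rule set_integral_nonneg, simp)

lemma unit_bounded_Cauchy_Schwarz: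
  assumes f: "unit_bounded f" and g: "unit_bounded g" and S: "S \<in> sets lborel"
  shows "(LINT x:S|lborel. f x * g x)^2 \<le> (LINT x:S|lborel. (f x)^2) * (LINT x:S|lborel. (g x)^2)"
  by (intro set_integral_Cauchy_Schwarz unit_bounded_set_integrable[OF _ S] unit_bounded_power2
      unit_bounded_mult f g)

lemma unit_bounded_Icc_Cauchy_Schwarz:
  assumes f: "unit_bounded f" and "a \<le> b"
  shows "(LINT x:{a..b}|lborel. f x)^2 \<le> (b - a) * (LINT x:{a..b}|lborel. (f x)^2)"
proof -
  have one: "set_integrable lborel {a..b} (\<lambda>x. c)" for c :: real
    by (simp add: set_integrable_def integrable_indicator_iff emeasure_lborel_Icc_eq)
  have "(LINT x:{a..b}|lborel. f x * 1)^2
      \<le> (LINT x:{a..b}|lborel. (f x)^2) * (LINT x:{a..b}|lborel. 1^2)"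
    using set_integral_Cauchy_Schwarz[of lborel "{a..b}" f "\<lambda>_. 1"]
      unit_bounded_set_integrable[OF unit_bounded_power2[OF f]] unit_bounded_set_integrable[OF f] one
    by simp
  also have "(LINT x:{a..b}|lborel. (1::real)^2) = b - a"
    using assms(2) by (simp add: set_integral_const emeasure_lborel_Icc_eq measure_def)
  finally show ?thesis by (simp add: mult.commute)
qed

lemma AE_eq_0_of_set_integral_power2_eq_0:
  assumes f: "unit_bounded f" and zero: "(LINT x:{0..1}|lborel. (f x)^2) = 0"
  shows "AE x in lborel. x \<in> {0..1} \<longrightarrow> f x = 0"
proof -
  have i: "integrable lborel (\<lambda>x. indicator {0..1} x * (f x)^2)"
    using unit_bounded_set_integrable[OF unit_bounded_power2[OF f], of "{0..1}"]
    unfolding set_integrable_def by simp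
  have "integral\<^sup>L lborel (\<lambda>x. indicator {0..1} x * (f x)^2) = 0"
    using zero unfolding set_lebesgue_integral_def by simp
  then have "AE x in lborel. indicator {0..1} x * (f x)^2 = 0"
    using integral_nonneg_eq_0_iff_AE[OF i] by simp
  then show ?thesis by eventually_elim (auto split: split_indicator)
qed

section \<open>A Wirtinger-type bound for tails of mean-zero functions\<close>

lemma sq_le_of_two_sided_bounds:
  fixes D a b A1 A2 :: real
  assumes "D \<le> a * A1" "D \<le> b * A2" "0 \<le> a" "0 \<le> b" "0 \<le> A1" "0 \<le> A2" "a + b = 1/2"
  shows "D \<le> 2 * a * b * (A1 + A2)"
proof -
  have "b * D \<le> b * (a * A1)" "a * D \<le> a * (b * A2)"
    using assms by (auto intro: mult_left_mono)
  then have "(a + b) * D \<le> a * b * (A1 + A2)" by (simp add: algebra_simps)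
  then show ?thesis using assms(7) by simp
qed

lemma sq_add_le_of_sq_le:
  fixes u1 u2 l1 l2 B1 B2 :: real
  assumes "u1^2 \<le> l1 * B1" "u2^2 \<le> l2 * B2" "0 \<le> l1" "0 \<le> l2" "0 \<le> B1" "0 \<le> B2"
  shows "(u1 + u2)^2 \<le> (l1 + l2) * (B1 + B2)"
proof -
  have "(2 * u1 * u2)^2 = 4 * (u1^2 * u2^2)" by (simp add: power2_eq_square algebra_simps)
  also have "\<dots> \<le> 4 * ((l1 * B1) * (l2 * B2))"
    using assms by (intro mult_left_mono mult_mono) auto
  also have "\<dots> \<le> (l1 * B2 + l2 * B1)^2"
  proof -
    have "(l1 * B2 + l2 * B1)^2 - 4 * ((l1 * B1) * (l2 * B2)) = (l1 * B2 - l2 * B1)^2" by algebra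
    then show ?thesis by (smt (verit) zero_le_power2)
  qed
  finally have "2 * u1 * u2 \<le> l1 * B2 + l2 * B1"
    by (rule power2_le_imp_le) (use assms in simp)
  then have "(u1 + u2)^2 \<le> l1 * B1 + l2 * B2 + (l1 * B2 + l2 * B1)"
    using assms(1,2) by (simp add: power2_eq_square algebra_simps)
  also have "\<dots> = (l1 + l2) * (B1 + B2)" by (simp add: algebra_simps)
  finally show ?thesis .
qed

lemma set_integral_Icc_parabola:
  fixes a b p q c :: real
  assumes "a \<le> b"
  shows "(LINT x:{a..b}|lborel. c * ((x - p) * (q - x)))
    = c * ((- (b^3) / 3 + (p + q) * b^2 / 2 - p * q * b) - (- (a^3) / 3 + (p + q) * a^2 / 2 - p * q * a))"
proof -
  let ?F = "\<lambda>x::real. c * (- (x^3) / 3 + (p + q) * x^2 / 2 - p * q * x)"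
  have "integral\<^sup>L lborel (\<lambda>x. indicator {a .. b} x *\<^sub>R (c * ((x - p) * (q - x)))) = ?F b - ?F a"
  proof (rule integral_FTC_atLeastAtMost[OF assms])
    fix x :: real
    have "(?F has_real_derivative c * ((x - p) * (q - x))) (at x within {a..b})"
      by (auto intro!: derivative_eq_intros) (simp add: power2_eq_square, algebra)
    then show "(?F has_vector_derivative c * ((x - p) * (q - x))) (at x within {a..b})"
      by (simp add: has_real_derivative_iff_has_vector_derivative)
  qed (intro continuous_intros)
  then show ?thesis unfolding set_lebesgue_integral_def by (simp only: right_diff_distrib)
qed

lemma tail_diff_sq_le:
  assumes w: "unit_bounded w" and "a \<le> b" "b \<le> 1"
  shows "(tail w a - tail w b)^2 \<le> (b - a) * (LINT x:{a..b}|lborel. (w x)^2)"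
  using unit_bounded_Icc_Cauchy_Schwarz[OF w assms(2)] tail_split[OF w assms(2,3)] by simp

text \<open>Each point \<open>x\<close> splits one of the two half-periods \<open>[z0, z0 + 1/2]\<close> and
  \<open>[z0 + 1/2, 1] \<union> [0, z0]\<close> (read cyclically, since \<open>tail w\<close> vanishes at 0 and 1) into two
  pieces, and Cauchy--Schwarz on either piece bounds the deviation of \<open>tail w x\<close> from
  \<open>tail w z0 = tail w (z0 + 1/2)\<close>.\<close>

context
  fixes w :: "real \<Rightarrow> real" and z0 :: real
  assumes w: "unit_bounded w" and mass_w: "mass w = 0" and z0: "0 \<le> z0" "z0 \<le> 1/2"
    and balanced: "tail w (z0 + 1/2) = tail w z0"
begin

private abbreviation (input) W :: "real \<Rightarrow> real \<Rightarrow> real" where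
  "W a b \<equiv> LINT x:{a..b}|lborel. (w x)^2"

private lemma W_nonneg: "0 \<le> W a b"
  by (rule set_integral_nonneg) simp

private lemma W_split:
  assumes "a \<le> b" "b \<le> c"
  shows "W a c = W a b + W b c"
  by (rule set_integral_Icc_split[OF unit_bounded_set_integrable[OF unit_bounded_power2[OF w]] assms])
     simp

private lemma tail_0: "tail w 0 = 0" and tail_1: "tail w 1 = 0"
  using tail_zero_eq_mass[OF w] mass_w tail_one[OF w] by simp_all

lemma tail_dev_middle_le:
  assumes "z0 \<le> x" "x \<le> z0 + 1/2"
  shows "(tail w x - tail w z0)^2 \<le> 2 * W z0 (z0 + 1/2) * ((x - z0) * (z0 + 1/2 - x))"
proof -
  have "(tail w x - tail w z0)^2 \<le> 2 * (x - z0) * (z0 + 1/2 - x) * (W z0 x + W x (z0 + 1/2))"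
  proof (rule sq_le_of_two_sided_bounds)
    show "(tail w x - tail w z0)^2 \<le> (x - z0) * W z0 x"
      using tail_diff_sq_le[OF w, of z0 x] assms z0 by (simp add: power2_commute)
    show "(tail w x - tail w z0)^2 \<le> (z0 + 1/2 - x) * W x (z0 + 1/2)"
      using tail_diff_sq_le[OF w, of x "z0 + 1/2"] assms z0 balanced by simp
  qed (use assms W_nonneg in auto)
  also have "\<dots> = 2 * (W z0 x + W x (z0 + 1/2)) * ((x - z0) * (z0 + 1/2 - x))"
    by (simp add: field_simps)
  also have "W z0 x + W x (z0 + 1/2) = W z0 (z0 + 1/2)"
    using W_split[of z0 x "z0 + 1/2"] assms by simp
  finally show ?thesis .
qed

lemma tail_dev_right_le:
  assumes "z0 + 1/2 \<le> x" "x \<le> 1"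
  shows "(tail w x - tail w z0)^2
    \<le> 2 * (W 0 z0 + W (z0 + 1/2) 1) * ((x - (z0 + 1/2)) * (1 + z0 - x))"
proof -
  have "(tail w x - tail w z0)^2 \<le> 2 * (x - (z0 + 1/2)) * (1 - x + z0) * (W (z0 + 1/2) x + (W x 1 + W 0 z0))"
  proof (rule sq_le_of_two_sided_bounds)
    show "(tail w x - tail w z0)^2 \<le> (x - (z0 + 1/2)) * W (z0 + 1/2) x"
      using tail_diff_sq_le[OF w, of "z0 + 1/2" x] assms balanced by (simp add: power2_commute)
    have "(tail w x - tail w z0) = (tail w x - tail w 1) + (tail w 0 - tail w z0)"
      using tail_0 tail_1 by simp
    also have "(\<dots>)^2 \<le> ((1 - x) + (z0 - 0)) * (W x 1 + W 0 z0)"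
      using tail_diff_sq_le[OF w, of x 1] tail_diff_sq_le[OF w, of 0 z0] assms z0 W_nonneg
      by (intro sq_add_le_of_sq_le) auto
    finally show "(tail w x - tail w z0)^2 \<le> (1 - x + z0) * (W x 1 + W 0 z0)" by simp
  qed (use assms z0 W_nonneg in auto)
  also have "\<dots> = 2 * (W 0 z0 + (W (z0 + 1/2) x + W x 1)) * ((x - (z0 + 1/2)) * (1 + z0 - x))"
    by (simp add: field_simps)
  also have "W (z0 + 1/2) x + W x 1 = W (z0 + 1/2) 1"
    using W_split[of "z0 + 1/2" x 1] assms by simp
  finally show ?thesis .
qed

lemma tail_dev_left_le:
  assumes "0 \<le> x" "x \<le> z0"
  shows "(tail w x - tail w z0)^2
    \<le> 2 * (W 0 z0 + W (z0 + 1/2) 1) * ((x - (z0 - 1/2)) * (z0 - x))"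
proof -
  have "(tail w x - tail w z0)^2 \<le> 2 * (z0 - x) * (x + 1/2 - z0) * (W x z0 + (W 0 x + W (z0 + 1/2) 1))"
  proof (rule sq_le_of_two_sided_bounds)
    show "(tail w x - tail w z0)^2 \<le> (z0 - x) * W x z0"
      using tail_diff_sq_le[OF w, of x z0] assms z0 by simp
    have "(tail w x - tail w z0) = (tail w x - tail w 0) + (tail w 1 - tail w (z0 + 1/2))"
      using tail_0 tail_1 balanced by simp
    also have "(\<dots>)^2 \<le> ((x - 0) + (1 - (z0 + 1/2))) * (W 0 x + W (z0 + 1/2) 1)"
      using tail_diff_sq_le[OF w, of 0 x] tail_diff_sq_le[OF w, of "z0 + 1/2" 1] assms z0 W_nonneg
      by (intro sq_add_le_of_sq_le) (auto simp: power2_commute)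
    finally show "(tail w x - tail w z0)^2 \<le> (x + 1/2 - z0) * (W 0 x + W (z0 + 1/2) 1)"
      by (simp add: add_diff_eq)
  qed (use assms z0 W_nonneg in auto)
  also have "\<dots> = 2 * ((W 0 x + W x z0) + W (z0 + 1/2) 1) * ((x - (z0 - 1/2)) * (z0 - x))"
    by (simp add: field_simps)
  also have "W 0 x + W x z0 = W 0 z0"
    using W_split[of 0 x z0] assms by simp
  finally show ?thesis .
qed

lemma integral_tail_dev_le: "(LINT x:{0..1}|lborel. (tail w x - tail w z0)^2) \<le> 1/24 * W 0 1"
proof -
  define J1 where "J1 = W z0 (z0 + 1/2)"
  define J2 where "J2 = W 0 z0 + W (z0 + 1/2) 1"
  define D where "D x = (tail w x - tail w z0)^2" for x
  have "continuous_on UNIV D" unfolding D_def by (intro continuous_intros continuous_on_tail[OF w])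
  then have D: "set_integrable lborel {a..b} D" for a b
    by (rule borel_integrable_atLeastAtMost'[OF continuous_on_subset]) auto
  have parabola: "set_integrable lborel {a..b} (\<lambda>x. c * ((x - p) * (q - x)))" for a b c p q :: real
    by (rule borel_integrable_atLeastAtMost') (intro continuous_intros)
  have z1: "z0 \<le> z0 + 1/2" "z0 + 1/2 \<le> 1" using z0 by auto
  have "(LINT x:{0..1}|lborel. D x) = (LINT x:{0..z0}|lborel. D x)
      + (LINT x:{z0..z0 + 1/2}|lborel. D x) + (LINT x:{z0 + 1/2..1}|lborel. D x)"
    using set_integral_Icc_split[OF D, of 0 z0 1] set_integral_Icc_split[OF D, of z0 "z0 + 1/2" 1]
      z0 z1 by simp
  also have "\<dots> \<le> (LINT x:{0..z0}|lborel. (2 * J2) * ((x - (z0 - 1/2)) * (z0 - x)))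
      + (LINT x:{z0..z0 + 1/2}|lborel. (2 * J1) * ((x - z0) * (z0 + 1/2 - x)))
      + (LINT x:{z0 + 1/2..1}|lborel. (2 * J2) * ((x - (z0 + 1/2)) * (1 + z0 - x)))"
    unfolding D_def J1_def J2_def
    using tail_dev_left_le tail_dev_middle_le tail_dev_right_le
    by (intro add_mono set_integral_mono D[unfolded D_def] parabola) auto
  also have "\<dots> = 1/24 * (J1 + J2)"
    unfolding set_integral_Icc_parabola[OF z0(1)] set_integral_Icc_parabola[OF z1(1)]
      set_integral_Icc_parabola[OF z1(2)]
    by (simp add: field_simps) algebra
  also have "J1 + J2 = W 0 1"
    unfolding J1_def J2_def using W_split[of 0 z0 1] W_split[of z0 "z0 + 1/2" 1] z0 z1 by simp
  finally show ?thesis unfolding D_def .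
qed

end

lemma tail_Poincare:
  assumes w: "unit_bounded w" and mass_w: "mass w = 0"
  shows "\<exists>k. (LINT x:{0..1}|lborel. (tail w x - k)^2) \<le> 1/24 * (LINT x:{0..1}|lborel. (w x)^2)"
proof -
  have tail_0: "tail w 0 = 0" and tail_1: "tail w 1 = 0"
    using tail_zero_eq_mass[OF w] mass_w tail_one[OF w] by simp_all
  have cont: "continuous_on {0..1/2} (\<lambda>z. tail w (z + 1/2) - tail w z)"
    by (intro continuous_intros continuous_on_compose2[OF continuous_on_tail[OF w]]) auto
  \<comment> \<open>The difference changes sign between z = 0 and z = 1/2, because tail w vanishes at 0 and 1.\<close>
  have "\<exists>z. 0 \<le> z \<and> z \<le> 1/2 \<and> tail w (z + 1/2) - tail w z = 0"
  proof (cases "0 \<le> tail w (1/2)")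
    case True
    show ?thesis by (rule IVT2'[OF _ _ _ cont]) (use True tail_0 tail_1 in auto)
  next
    case False
    show ?thesis by (rule IVT'[OF _ _ _ cont]) (use False tail_0 tail_1 in auto)
  qed
  then obtain z0 where "0 \<le> z0" "z0 \<le> 1/2" "tail w (z0 + 1/2) = tail w z0" by auto
  then show ?thesis using integral_tail_dev_le[OF w mass_w] by blast
qed

section \<open>Energy and entropy gaps\<close>

definition energy :: "(real \<Rightarrow> real) \<Rightarrow> (real \<Rightarrow> real) \<Rightarrow> (real \<Rightarrow> real) \<Rightarrow> real" where
  "energy f g h = pairing f h + pairing g f + pairing h g"

definition entropy :: "(real \<Rightarrow> real) \<Rightarrow> (real \<Rightarrow> real) \<Rightarrow> (real \<Rightarrow> real) \<Rightarrow> real" where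
  "entropy f g h = (LINT x:{0..1}|lborel. xlnx (f x) + xlnx (g x) + xlnx (h x))"

lemma free_energy_eq:
  assumes f: "unit_bounded f" and g: "unit_bounded g" and h: "unit_bounded h"
  shows "free_energy \<beta> f g h = \<beta> * energy f g h + entropy f g h"
proof -
  have "(LINT z:{x..1}|lborel. f x * h z + g x * f z + h x * g z)
      = f x * tail h x + g x * tail f x + h x * tail g x" for x
    using unit_bounded_set_integrable[OF h, of "{x..1}"] unit_bounded_set_integrable[OF f, of "{x..1}"]
      unit_bounded_set_integrable[OF g, of "{x..1}"]
    by (simp add: tail_eq_Icc[OF f] tail_eq_Icc[OF g] tail_eq_Icc[OF h])
  moreover have "(LINT x:{0..1}|lborel. f x * tail h x + g x * tail f x + h x * tail g x) = energy f g h"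
    unfolding energy_def pairing_def
    using unit_bounded_set_integrable[OF unit_bounded_mult_tail[OF f h], of "{0..1}"]
      unit_bounded_set_integrable[OF unit_bounded_mult_tail[OF g f], of "{0..1}"]
      unit_bounded_set_integrable[OF unit_bounded_mult_tail[OF h g], of "{0..1}"] by simp
  ultimately show ?thesis unfolding free_energy_def entropy_def xlnx_def by simp
qed

lemma free_energy_cong:
  assumes "\<And>x. x \<in> {0..1} \<Longrightarrow> f x = f' x" "\<And>x. x \<in> {0..1} \<Longrightarrow> g x = g' x"
    and "\<And>x. x \<in> {0..1} \<Longrightarrow> h x = h' x"
  shows "free_energy \<beta> f g h = free_energy \<beta> f' g' h'"
proof -
  have "(LINT z:{x..1}|lborel. f x * h z + g x * f z + h x * g z)
      = (LINT z:{x..1}|lborel. f' x * h' z + g' x * f' z + h' x * g' z)" if "x \<in> {0..1}" for x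
    by (rule set_lebesgue_integral_cong) (use assms that in auto)
  then have "(LINT x:{0..1}|lborel. (LINT z:{x..1}|lborel. f x * h z + g x * f z + h x * g z))
      = (LINT x:{0..1}|lborel. (LINT z:{x..1}|lborel. f' x * h' z + g' x * f' z + h' x * g' z))"
    by (intro set_lebesgue_integral_cong) auto
  moreover have "(LINT x:{0..1}|lborel. f x * ln (f x) + g x * ln (g x) + h x * ln (h x))
      = (LINT x:{0..1}|lborel. f' x * ln (f' x) + g' x * ln (g' x) + h' x * ln (h' x))"
    by (rule set_lebesgue_integral_cong) (use assms in auto)
  ultimately show ?thesis unfolding free_energy_def by simp
qed

lemma pairing_convexity_gap:
  assumes f: "unit_bounded f" "unit_bounded f'" and g: "unit_bounded g" "unit_bounded g'"
  shows "t * pairing f g + (1 - t) * pairing f' g'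
      - pairing (\<lambda>x. t * f x + (1 - t) * f' x) (\<lambda>x. t * g x + (1 - t) * g' x)
    = t * (1 - t) * pairing (\<lambda>x. f x - f' x) (\<lambda>x. g x - g' x)"
proof -
  have diff: "(\<lambda>x. u x - v x) = (\<lambda>x. 1 * u x + (-1) * v x)" for u v :: "real \<Rightarrow> real" by simp
  have "pairing (\<lambda>x. a * f x + b * f' x) (\<lambda>x. c * g x + d * g' x)
      = a * (c * pairing f g + d * pairing f g') + b * (c * pairing f' g + d * pairing f' g')" for a b c d
    unfolding pairing_lin_left[OF f unit_bounded_lin[OF g]] pairing_lin_right[OF f(1) g]
      pairing_lin_right[OF f(2) g] ..
  from this[of t "1 - t" t "1 - t"] this[of 1 "-1" 1 "-1", folded diff] show ?thesis
    by (simp only:) (simp add: algebra_simps)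
qed

lemma energy_convexity_gap:
  assumes "unit_bounded f" "unit_bounded f'" "unit_bounded g" "unit_bounded g'"
    and "unit_bounded h" "unit_bounded h'"
  shows "t * energy f g h + (1 - t) * energy f' g' h'
      - energy (\<lambda>x. t * f x + (1 - t) * f' x) (\<lambda>x. t * g x + (1 - t) * g' x)
          (\<lambda>x. t * h x + (1 - t) * h' x)
    = t * (1 - t) * energy (\<lambda>x. f x - f' x) (\<lambda>x. g x - g' x) (\<lambda>x. h x - h' x)"
  using pairing_convexity_gap[of f f' h h' t] pairing_convexity_gap[of g g' f f' t]
    pairing_convexity_gap[of h h' g g' t] assms
  unfolding energy_def by (simp add: algebra_simps)

lemma energy_of_mass_zero:
  assumes u: "unit_bounded u" and v: "unit_bounded v" and "mass u = 0" "mass v = 0"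
  shows "energy u v (\<lambda>x. - u x - v x) = - 3 * pairing u v"
proof -
  have neg: "(\<lambda>x. - u x - v x) = (\<lambda>x. (-1) * u x + (-1) * v x)" by simp
  have "pairing u u = 0" "pairing v v = 0" "pairing v u = - pairing u v"
    using pairing_swap_add[OF u u] pairing_swap_add[OF v v] pairing_swap_add[OF u v] assms(3,4)
    by simp_all
  then show ?thesis
    unfolding energy_def neg pairing_lin_right[OF u u v] pairing_lin_left[OF u v v] by simp
qed

lemma pairing_sq_le:
  assumes u: "unit_bounded u" and w: "unit_bounded w" and mass: "mass u = 0" "mass w = 0"
  shows "(pairing u w)^2
    \<le> (LINT x:{0..1}|lborel. (u x)^2) * (1/24 * (LINT x:{0..1}|lborel. (w x)^2))"
proof -
  obtain k where k: "(LINT x:{0..1}|lborel. (tail w x - k)^2) \<le> 1/24 * (LINT x:{0..1}|lborel. (w x)^2)"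
    using tail_Poincare[OF w mass(2)] by blast
  define g where "g x = indicator {0..1} x * (tail w x - k)" for x
  obtain C where C: "0 \<le> C" "\<And>x. \<bar>w x\<bar> \<le> C" using unit_bounded_boundE[OF w] by blast
  have "\<bar>g x\<bar> \<le> C + \<bar>k\<bar>" for x
    using abs_tail_le[OF w C(2), of x] C(1) unfolding g_def by (auto split: split_indicator)
  then have g: "unit_bounded g"
    unfolding unit_bounded_def g_def using tail_measurable[OF w] by auto
  \<comment> \<open>Since u has mass zero, subtracting the constant k from tail w does not change the pairing.\<close>
  have "pairing u w = (LINT x:{0..1}|lborel. u x * g x + k * u x)"
    unfolding pairing_def by (rule set_lebesgue_integral_cong) (auto simp: g_def algebra_simps)
  also have "\<dots> = (LINT x:{0..1}|lborel. u x * g x)"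
    using mass unfolding mass_def
    using unit_bounded_set_integrable[OF unit_bounded_mult[OF u g], of "{0..1}"]
      unit_bounded_set_integrable[OF u, of "{0..1}"] by simp
  finally have "(pairing u w)^2 \<le> (LINT x:{0..1}|lborel. (u x)^2) * (LINT x:{0..1}|lborel. (g x)^2)"
    using unit_bounded_Cauchy_Schwarz[OF u g] by simp
  also have "(LINT x:{0..1}|lborel. (g x)^2) = (LINT x:{0..1}|lborel. (tail w x - k)^2)"
    by (rule set_lebesgue_integral_cong) (auto simp: g_def)
  also have "(LINT x:{0..1}|lborel. (u x)^2) * \<dots>
      \<le> (LINT x:{0..1}|lborel. (u x)^2) * (1/24 * (LINT x:{0..1}|lborel. (w x)^2))"
    by (rule mult_left_mono[OF k]) (rule set_integral_nonneg, simp)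
  finally show ?thesis .
qed

definition unit_profile :: "(real \<Rightarrow> real) \<Rightarrow> (real \<Rightarrow> real) \<Rightarrow> (real \<Rightarrow> real) \<Rightarrow> bool" where
  "unit_profile f g h \<longleftrightarrow> unit_bounded f \<and> unit_bounded g \<and> unit_bounded h \<and>
     (\<forall>x. 0 \<le> f x \<and> 0 \<le> g x \<and> 0 \<le> h x \<and> (x \<in> {0..1} \<longrightarrow> f x + g x + h x = 1))"

lemma unit_profileD:
  assumes "unit_profile f g h"
  shows "unit_bounded f" "unit_bounded g" "unit_bounded h"
    and "0 \<le> f x" "0 \<le> g x" "0 \<le> h x" "x \<in> {0..1} \<Longrightarrow> f x + g x + h x = 1"
    and "f x \<le> 1" "g x \<le> 1" "h x \<le> 1"
proof -
  show "f x \<le> 1" "g x \<le> 1" "h x \<le> 1"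
    using assms unit_boundedD(2)[of _ x] unfolding unit_profile_def
    by (cases "x \<in> {0..1}"; force)+
qed (use assms in \<open>auto simp: unit_profile_def\<close>)

lemma unit_profile_of_admissible:
  assumes "admissible rA rB rC nA nB nC"
  shows "unit_profile (\<lambda>x. indicator {0..1} x * nA x) (\<lambda>x. indicator {0..1} x * nB x)
      (\<lambda>x. indicator {0..1} x * nC x)"
    and "mass (\<lambda>x. indicator {0..1} x * nA x) = rA" "mass (\<lambda>x. indicator {0..1} x * nB x) = rB"
proof -
  have range: "0 \<le> n x \<and> n x \<le> 1" if "x \<in> {0..1}" "n \<in> {nA, nB, nC}" for x n
    using assms that unfolding admissible_def by fastforce
  show "unit_profile (\<lambda>x. indicator {0..1} x * nA x) (\<lambda>x. indicator {0..1} x * nB x)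
      (\<lambda>x. indicator {0..1} x * nC x)"
    using assms range unfolding admissible_def unit_profile_def
    by (auto intro!: unit_bounded_indicator_mult split: split_indicator)
  show "mass (\<lambda>x. indicator {0..1} x * nA x) = rA" "mass (\<lambda>x. indicator {0..1} x * nB x) = rB"
    using assms unfolding mass_def admissible_def
    by (auto intro!: set_lebesgue_integral_cong)
qed

lemma admissible_cut_not_AE_eq:
  assumes "admissible rA rB rC nA nB nC" "admissible rA rB rC mA mB mC"
    and "\<not> (AE x in lborel. x \<in> {0..1} \<longrightarrow> nA x = mA x \<and> nB x = mB x \<and> nC x = mC x)"
  shows "\<not> (AE x in lborel. x \<in> {0..1} \<longrightarrow>
      indicator {0..1} x * nA x = indicator {0..1} x * mA x \<and>
      indicator {0..1} x * nB x = indicator {0..1} x * mB x)"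
proof
  have sum: "nA x + nB x + nC x = mA x + mB x + mC x" if "x \<in> {0..1}" for x
    using assms(1,2) that unfolding admissible_def by simp
  assume "AE x in lborel. x \<in> {0..1} \<longrightarrow>
      indicator {0..1} x * nA x = indicator {0..1} x * mA x \<and>
      indicator {0..1} x * nB x = indicator {0..1} x * mB x"
  then have "AE x in lborel. x \<in> {0..1} \<longrightarrow> nA x = mA x \<and> nB x = mB x \<and> nC x = mC x"
    by eventually_elim (use sum in fastforce)
  with assms(3) show False ..
qed

lemma unit_profile_mix:
  assumes "unit_profile f g h" "unit_profile f' g' h'" "0 \<le> t" "t \<le> 1"
  shows "unit_profile (\<lambda>x. t * f x + (1 - t) * f' x) (\<lambda>x. t * g x + (1 - t) * g' x)
    (\<lambda>x. t * h x + (1 - t) * h' x)"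
proof -
  have "t * f x + (1 - t) * f' x + (t * g x + (1 - t) * g' x) + (t * h x + (1 - t) * h' x)
      = t * (f x + g x + h x) + (1 - t) * (f' x + g' x + h' x)" for x
    by (simp add: algebra_simps)
  then show ?thesis
    using assms unit_bounded_lin unfolding unit_profile_def by auto
qed

lemma unit_bounded_entropy_density:
  assumes "unit_profile f g h"
  shows "unit_bounded (\<lambda>x. xlnx (f x) + xlnx (g x) + xlnx (h x))"
  using unit_profileD[OF assms] by (intro unit_bounded_add unit_bounded_xlnx) auto

lemma entropy_convexity_gap:
  assumes p: "unit_profile pA pB pC" and q: "unit_profile qA qB qC" and t: "0 < t" "t < 1"
  shows "t * (1 - t) * (LINT x:{0..1}|lborel. (pA x - qA x)^2 + (pB x - qB x)^2 + (pC x - qC x)^2)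
    \<le> t * entropy pA pB pC + (1 - t) * entropy qA qB qC
      - entropy (\<lambda>x. t * pA x + (1 - t) * qA x) (\<lambda>x. t * pB x + (1 - t) * qB x)
          (\<lambda>x. t * pC x + (1 - t) * qC x)"
proof -
  let ?S = "\<lambda>f g h x. xlnx (f x) + xlnx (g x) + xlnx (h x)"
  let ?r = "\<lambda>f g x. t * f x + (1 - t) * g x"
  have r: "unit_profile (?r pA qA) (?r pB qB) (?r pC qC)"
    using unit_profile_mix[OF p q] t by simp
  note S = unit_bounded_set_integrable[OF unit_bounded_entropy_density, of _ _ _ "{0..1}"]
  have "(LINT x:{0..1}|lborel. t * (1 - t) * ((pA x - qA x)^2 + (pB x - qB x)^2 + (pC x - qC x)^2))
      \<le> (LINT x:{0..1}|lborel. t * ?S pA pB pC x + (1 - t) * ?S qA qB qC x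
          - ?S (?r pA qA) (?r pB qB) (?r pC qC) x)"
  proof (rule set_integral_mono)
    show "set_integrable lborel {0..1}
        (\<lambda>x. t * (1 - t) * ((pA x - qA x)^2 + (pB x - qB x)^2 + (pC x - qC x)^2))"
      using unit_profileD(1-3)[OF p] unit_profileD(1-3)[OF q]
      by (intro unit_bounded_set_integrable unit_bounded_cmult unit_bounded_add unit_bounded_power2
          unit_bounded_diff) auto
    show "set_integrable lborel {0..1} (\<lambda>x. t * ?S pA pB pC x + (1 - t) * ?S qA qB qC x
        - ?S (?r pA qA) (?r pB qB) (?r pC qC) x)"
      using S[OF p] S[OF q] S[OF r] by auto
    show "t * (1 - t) * ((pA x - qA x)^2 + (pB x - qB x)^2 + (pC x - qC x)^2)
        \<le> t * ?S pA pB pC x + (1 - t) * ?S qA qB qC x - ?S (?r pA qA) (?r pB qB) (?r pC qC) x"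
      if "x \<in> {0..1}" for x
      using entropy_convexity_gap3[of "pA x" "pB x" "pC x" "qA x" "qB x" "qC x" t]
        unit_profileD(4-7)[OF p, of x] unit_profileD(4-7)[OF q, of x] that t
      by (simp add: algebra_simps)
  qed
  then show ?thesis
    unfolding entropy_def using S[OF p] S[OF q] S[OF r] by simp
qed

lemma unit_profile_third_diff:
  assumes "unit_profile pA pB pC" "unit_profile qA qB qC"
  shows "(\<lambda>x. pC x - qC x) = (\<lambda>x. - (pA x - qA x) - (pB x - qB x))"
proof
  fix x
  show "pC x - qC x = - (pA x - qA x) - (pB x - qB x)"
  proof (cases "x \<in> {0..1}")
    case True
    then show ?thesis
      using unit_profileD(7)[OF assms(1), where x=x] unit_profileD(7)[OF assms(2), where x=x] by linarith
  next
    case False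
    then show ?thesis
      using unit_profileD(1-3)[OF assms(1)] unit_profileD(1-3)[OF assms(2)]
      by (simp add: unit_boundedD(2)[OF _ False])
  qed
qed

lemma energy_gap_unit_profile:
  assumes p: "unit_profile pA pB pC" and q: "unit_profile qA qB qC"
    and mass: "mass pA = mass qA" "mass pB = mass qB"
  defines "u \<equiv> \<lambda>x. pA x - qA x" and "v \<equiv> \<lambda>x. pB x - qB x"
  shows "t * energy pA pB pC + (1 - t) * energy qA qB qC
      - energy (\<lambda>x. t * pA x + (1 - t) * qA x) (\<lambda>x. t * pB x + (1 - t) * qB x)
          (\<lambda>x. t * pC x + (1 - t) * qC x)
    = - 3 * t * (1 - t) * pairing u (\<lambda>x. v x + u x / 2)"
proof -
  note pb = unit_profileD(1-3)[OF p] and qb = unit_profileD(1-3)[OF q]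
  have u: "unit_bounded u" "mass u = 0" and v: "unit_bounded v" "mass v = 0"
    unfolding u_def v_def using pb qb mass mass_diff unit_bounded_diff by auto
  have "pairing u (\<lambda>x. v x + u x / 2) = pairing u v"
    using pairing_lin_right[OF u(1) v(1) u(1), of 1 "1/2"] pairing_swap_add[OF u(1) u(1)] u(2)
    by simp
  then show ?thesis
    using energy_convexity_gap[OF pb(1) qb(1) pb(2) qb(2) pb(3) qb(3), of t]
      energy_of_mass_zero[OF u(1) v(1) u(2) v(2)] unit_profile_third_diff[OF p q]
    unfolding u_def v_def by simp
qed

lemma sum_sq_of_zero_sum_integral:
  assumes u: "unit_bounded u" and v: "unit_bounded v"
  shows "(LINT x:{0..1}|lborel. (u x)^2 + (v x)^2 + (- u x - v x)^2)
    = 3/2 * (LINT x:{0..1}|lborel. (u x)^2) + 2 * (LINT x:{0..1}|lborel. (v x + u x / 2)^2)"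
proof -
  have w: "unit_bounded (\<lambda>x. v x + u x / 2)" using unit_bounded_lin[OF v u, of 1 "1/2"] by simp
  have "(LINT x:{0..1}|lborel. (u x)^2 + (v x)^2 + (- u x - v x)^2)
      = (LINT x:{0..1}|lborel. 3/2 * (u x)^2 + 2 * (v x + u x / 2)^2)"
    by (rule set_lebesgue_integral_cong) (auto simp: power2_eq_square algebra_simps)
  also have "\<dots> = (LINT x:{0..1}|lborel. 3/2 * (u x)^2) + (LINT x:{0..1}|lborel. 2 * (v x + u x / 2)^2)"
    by (intro set_integral_add(2) unit_bounded_set_integrable unit_bounded_cmult unit_bounded_power2 u w)
       simp_all
  finally show ?thesis by (simp only: set_integral_mult_right)
qed

lemma quadratic_form_dominates:
  fixes \<beta> X Y P :: real
  assumes "0 < \<beta>" "\<beta> < 16/3" "0 \<le> X" "0 \<le> Y" "0 < X + Y" "P^2 \<le> X * (1/24 * Y)"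
  shows "3 * \<beta> * P < 3/2 * X + 2 * Y"
proof (cases "P \<le> 0")
  case True
  then have "3 * \<beta> * P \<le> 0" using assms(1) by (simp add: mult_nonneg_nonpos)
  then show ?thesis using assms(3-5) by linarith
next
  case False
  then have XY: "0 < X * Y" using assms(3,4,6)
    by (smt (verit, best) mult_eq_0_iff mult_nonneg_nonneg zero_less_power)
  have "\<beta>^2 < (16/3)^2" using assms(1,2) by (intro power_strict_mono) auto
  have "(3 * \<beta> * P)^2 = 9 * \<beta>^2 * P^2" by (simp add: power2_eq_square)
  also have "\<dots> \<le> 9 * \<beta>^2 * (X * (1/24 * Y))" using assms(6) by (intro mult_left_mono) auto
  also have "\<dots> = 3/8 * \<beta>^2 * (X * Y)" by simp
  also have "\<dots> < 3/8 * (16/3)^2 * (X * Y)"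
    using \<open>\<beta>^2 < (16/3)^2\<close> XY by (intro mult_strict_right_mono) auto
  also have "\<dots> \<le> (3/2 * X + 2 * Y)^2"
    using zero_le_power2[of "3/2 * X - 2 * Y"] XY by (simp add: power2_eq_square algebra_simps)
  finally show ?thesis by (rule power2_less_imp_less) (use assms(3,4) in simp)
qed

lemma sq_integrals_pos_of_not_AE_zero:
  assumes u: "unit_bounded u" and v: "unit_bounded v"
    and nz: "\<not> (AE x in lborel. x \<in> {0..1} \<longrightarrow> u x = 0 \<and> v x = 0)"
  shows "0 < (LINT x:{0..1}|lborel. (u x)^2) + (LINT x:{0..1}|lborel. (v x + u x / 2)^2)"
proof (rule ccontr)
  have w: "unit_bounded (\<lambda>x. v x + u x / 2)" using unit_bounded_lin[OF v u, of 1 "1/2"] by simp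
  assume "\<not> ?thesis"
  moreover have "0 \<le> (LINT x:{0..1}|lborel. (u x)^2)" "0 \<le> (LINT x:{0..1}|lborel. (v x + u x / 2)^2)"
    by (rule set_integral_nonneg, simp)+
  ultimately have "AE x in lborel. x \<in> {0..1} \<longrightarrow> u x = 0"
    and "AE x in lborel. x \<in> {0..1} \<longrightarrow> v x + u x / 2 = 0"
    using AE_eq_0_of_set_integral_power2_eq_0[OF u] AE_eq_0_of_set_integral_power2_eq_0[OF w]
    by simp_all
  then have "AE x in lborel. x \<in> {0..1} \<longrightarrow> u x = 0 \<and> v x = 0" by eventually_elim auto
  with nz show False ..
qed

lemma entropy_gap_unit_profile:
  assumes p: "unit_profile pA pB pC" and q: "unit_profile qA qB qC" and t: "0 < t" "t < 1"
  defines "u \<equiv> \<lambda>x. pA x - qA x" and "v \<equiv> \<lambda>x. pB x - qB x"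
  shows "t * (1 - t) * (3/2 * (LINT x:{0..1}|lborel. (u x)^2)
        + 2 * (LINT x:{0..1}|lborel. (v x + u x / 2)^2))
    \<le> t * entropy pA pB pC + (1 - t) * entropy qA qB qC
      - entropy (\<lambda>x. t * pA x + (1 - t) * qA x) (\<lambda>x. t * pB x + (1 - t) * qB x)
          (\<lambda>x. t * pC x + (1 - t) * qC x)"
proof -
  have "unit_bounded u" "unit_bounded v"
    using unit_profileD(1,2)[OF p] unit_profileD(1,2)[OF q] unit_bounded_diff unfolding u_def v_def
    by blast+
  from sum_sq_of_zero_sum_integral[OF this] entropy_convexity_gap[OF p q t]
  show ?thesis
    using fun_cong[OF unit_profile_third_diff[OF p q]] unfolding u_def v_def by simp
qed

lemma weighted_sum_gt_of_gaps:
  fixes \<beta> t c P D Ep Eq Er Sp Sq Sr :: real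
  assumes "t * Ep + (1 - t) * Eq - Er = - 3 * c * P" "c * D \<le> t * Sp + (1 - t) * Sq - Sr"
    and "3 * \<beta> * P < D" "0 < c"
  shows "\<beta> * Er + Sr < t * (\<beta> * Ep + Sp) + (1 - t) * (\<beta> * Eq + Sq)"
proof -
  have Er: "Er = t * Ep + (1 - t) * Eq + c * 3 * P" using assms(1) by simp
  have "\<beta> * Er = t * (\<beta> * Ep) + (1 - t) * (\<beta> * Eq) + c * (3 * \<beta> * P)"
    unfolding Er by (simp add: algebra_simps)
  moreover have "c * (3 * \<beta> * P) < c * D" using assms(3,4) by simp
  ultimately show ?thesis using assms(2) by (simp add: algebra_simps)
qed

lemma free_energy_strictly_convex_unit_profile:
  assumes \<beta>: "0 < \<beta>" "\<beta> < 16/3"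
    and p: "unit_profile pA pB pC" and q: "unit_profile qA qB qC"
    and mass: "mass pA = mass qA" "mass pB = mass qB"
    and ne: "\<not> (AE x in lborel. x \<in> {0..1} \<longrightarrow> pA x = qA x \<and> pB x = qB x)"
    and t: "0 < t" "t < 1"
  shows "free_energy \<beta> (\<lambda>x. t * pA x + (1 - t) * qA x) (\<lambda>x. t * pB x + (1 - t) * qB x)
           (\<lambda>x. t * pC x + (1 - t) * qC x)
    < t * free_energy \<beta> pA pB pC + (1 - t) * free_energy \<beta> qA qB qC"
proof -
  define u where "u x = pA x - qA x" for x
  define v where "v x = pB x - qB x" for x
  define X where "X = (LINT x:{0..1}|lborel. (u x)^2)"
  define Y where "Y = (LINT x:{0..1}|lborel. (v x + u x / 2)^2)"
  note pb = unit_profileD(1-3)[OF p] and qb = unit_profileD(1-3)[OF q]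
  have u: "unit_bounded u" "mass u = 0" and v: "unit_bounded v" "mass v = 0"
    unfolding u_def v_def using pb qb mass mass_diff unit_bounded_diff by auto
  have w: "unit_bounded (\<lambda>x. v x + u x / 2)" "mass (\<lambda>x. v x + u x / 2) = 0"
    using unit_bounded_lin[OF v(1) u(1), of 1 "1/2"] mass_lin[OF v(1) u(1), of 1 "1/2"] u v by simp_all
  have "0 \<le> X" "0 \<le> Y" unfolding X_def Y_def by (rule set_integral_nonneg, simp)+
  moreover have "0 < X + Y"
    unfolding X_def Y_def using ne by (intro sq_integrals_pos_of_not_AE_zero u v) (simp add: u_def v_def)
  ultimately have dom: "3 * \<beta> * pairing u (\<lambda>x. v x + u x / 2) < 3/2 * X + 2 * Y"
    using pairing_sq_le[OF u(1) w(1) u(2) w(2)] \<beta> unfolding X_def Y_def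
    by (intro quadratic_form_dominates) auto
  have r: "unit_profile (\<lambda>x. t * pA x + (1 - t) * qA x) (\<lambda>x. t * pB x + (1 - t) * qB x)
      (\<lambda>x. t * pC x + (1 - t) * qC x)"
    using unit_profile_mix[OF p q] t by simp
  show ?thesis
    unfolding free_energy_eq[OF pb] free_energy_eq[OF qb] free_energy_eq[OF unit_profileD(1-3)[OF r]]
  proof (rule weighted_sum_gt_of_gaps[OF _ _ dom])
    show "0 < t * (1 - t)" using t by simp
  qed (use energy_gap_unit_profile[OF p q mass, of t] entropy_gap_unit_profile[OF p q t]
      in \<open>simp_all add: u_def[abs_def] v_def[abs_def] X_def Y_def\<close>)
qed

theorem mainTheorem6:
  fixes \<beta> rA rB rC t :: real and nA nB nC mA mB mC :: "real \<Rightarrow> real"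
  assumes "0 < \<beta>" and "\<beta> < 4 * pi / 3"
    and "rA > 0" and "rB > 0" and "rC > 0" and "rA + rB + rC = 1"
    and "admissible rA rB rC nA nB nC"
    and "admissible rA rB rC mA mB mC"
    and "\<not> (AE x in lborel. x \<in> {0..1} \<longrightarrow> nA x = mA x \<and> nB x = mB x \<and> nC x = mC x)"
    and "0 < t" and "t < 1"
  shows "free_energy \<beta> (\<lambda>x. t * nA x + (1 - t) * mA x)
                       (\<lambda>x. t * nB x + (1 - t) * mB x)
                       (\<lambda>x. t * nC x + (1 - t) * mC x)
         < t * free_energy \<beta> nA nB nC + (1 - t) * free_energy \<beta> mA mB mC"
proof -
  let ?cut = "\<lambda>f x. indicator {0..1} x * f x"
  note n = unit_profile_of_admissible[OF assms(7)] and m = unit_profile_of_admissible[OF assms(8)]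
  note ne = admissible_cut_not_AE_eq[OF assms(7-9)]
  have "\<beta> < 16/3" using assms(2) pi_less_4 by simp
  then have "free_energy \<beta> (\<lambda>x. t * ?cut nA x + (1 - t) * ?cut mA x)
      (\<lambda>x. t * ?cut nB x + (1 - t) * ?cut mB x) (\<lambda>x. t * ?cut nC x + (1 - t) * ?cut mC x)
    < t * free_energy \<beta> (?cut nA) (?cut nB) (?cut nC)
      + (1 - t) * free_energy \<beta> (?cut mA) (?cut mB) (?cut mC)"
    using n m ne assms(1,10,11) by (intro free_energy_strictly_convex_unit_profile) auto
  moreover have "free_energy \<beta> (?cut f) (?cut g) (?cut h) = free_energy \<beta> f g h" for f g h
    by (rule free_energy_cong) auto
  moreover have "free_energy \<beta> (\<lambda>x. t * ?cut f x + (1 - t) * ?cut f' x)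
      (\<lambda>x. t * ?cut g x + (1 - t) * ?cut g' x) (\<lambda>x. t * ?cut h x + (1 - t) * ?cut h' x)
    = free_energy \<beta> (\<lambda>x. t * f x + (1 - t) * f' x) (\<lambda>x. t * g x + (1 - t) * g' x)
        (\<lambda>x. t * h x + (1 - t) * h' x)" for f g h f' g' h'
    by (rule free_energy_cong) auto
  ultimately show ?thesis by simp
qed

end
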